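(* For every $n\ge 8$, $k^*(n)>\lfloor (n-8)/3\rfloor$. In other words, for every $n\ge 8$ there is a pair of trees, each with at most $n$ vertices, for which every minimum $\lfloor (n-8)/3\rfloor$-isometric-universal graph is not a tree.
   Context: Graphs are finite, simple and undirected. $\mathrm{dist}_G(u,v)$ denotes the number of edges of a shortest $u$–$v$ path in $G$ ($\infty$ if none exists). For an integer $k\ge 0$, a subgraph $H$ of $G$ is $k$-isometric if, for all vertices $u,v$ of $H$, $\mathrm{dist}_H(u,v)=\mathrm{dist}_G(u,v)$ whenever $\mathrm{dist}_G(u,v)\le k$. A graph $\mathcal U$ is a $k$-isometric-universal graph for a family $\mathcal F$ of graphs if every graph of $\mathcal F$ is isomorphic to a $k$-isometric subgraph of $\mathcal U$; it is minimum if it has the smallest possible number of vertices among all such graphs, and minimal if no proper subgraph of it is $k$-isometric-universal for $\mathcal F$. $k^*(n)$ denotes the smallest value such that for every $k\ge k^*(n)$, every minimum and minimal $k$-isometric-universal graph for a pair of trees each with at most $n$ vertices is a tree. *)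

theory Defs
  imports Main "HOL-Library.Extended_Nat"
begin

definition graph :: "'a set \<Rightarrow> 'a set set \<Rightarrow> bool" where
  "graph V E \<longleftrightarrow> finite V \<and> (\<forall>e\<in>E. \<exists>u v. u \<noteq> v \<and> u \<in> V \<and> v \<in> V \<and> e = {u, v})"

fun walk :: "'a set set \<Rightarrow> nat \<Rightarrow> 'a \<Rightarrow> 'a \<Rightarrow> bool" where
  "walk E 0 u v = (u = v)"
| "walk E (Suc n) u v = (\<exists>w. {u, w} \<in> E \<and> walk E n w v)"

definition gdist :: "'a set set \<Rightarrow> 'a \<Rightarrow> 'a \<Rightarrow> enat" where
  "gdist E u v = (if \<exists>n. walk E n u v then enat (LEAST n. walk E n u v) else \<infinity>)"

definition connected_graph :: "'a set \<Rightarrow> 'a set set \<Rightarrow> bool" where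
  "connected_graph V E \<longleftrightarrow> (\<forall>u\<in>V. \<forall>v\<in>V. \<exists>n. walk E n u v)"

definition has_cycle :: "'a set \<Rightarrow> 'a set set \<Rightarrow> bool" where
  "has_cycle V E \<longleftrightarrow> (\<exists>xs. length xs \<ge> 3 \<and> distinct xs \<and> set xs \<subseteq> V \<and>
       (\<forall>i < length xs. {xs ! i, xs ! ((i + 1) mod length xs)} \<in> E))"

definition is_tree :: "'a set \<Rightarrow> 'a set set \<Rightarrow> bool" where
  "is_tree V E \<longleftrightarrow> graph V E \<and> V \<noteq> {} \<and> connected_graph V E \<and> \<not> has_cycle V E"

definition subgraph :: "'a set \<Rightarrow> 'a set set \<Rightarrow> 'a set \<Rightarrow> 'a set set \<Rightarrow> bool" where
  "subgraph VH EH VG EG \<longleftrightarrow> graph VH EH \<and> VH \<subseteq> VG \<and> EH \<subseteq> EG"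

definition k_isometric :: "nat \<Rightarrow> 'a set \<Rightarrow> 'a set set \<Rightarrow> 'a set set \<Rightarrow> bool" where
  "k_isometric k VH EH EG \<longleftrightarrow>
     (\<forall>u\<in>VH. \<forall>v\<in>VH. gdist EG u v \<le> enat k \<longrightarrow> gdist EH u v = gdist EG u v)"

definition isomorphic ::
  "'a set \<Rightarrow> 'a set set \<Rightarrow> 'b set \<Rightarrow> 'b set set \<Rightarrow> bool" where
  "isomorphic V E V' E' \<longleftrightarrow> (\<exists>f. bij_betw f V V' \<and>
     (\<forall>u\<in>V. \<forall>v\<in>V. {u, v} \<in> E \<longleftrightarrow> {f u, f v} \<in> E'))"

definition k_iso_embeds ::
  "nat \<Rightarrow> 'a set \<Rightarrow> 'a set set \<Rightarrow> 'b set \<Rightarrow> 'b set set \<Rightarrow> bool" where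
  "k_iso_embeds k V E VU EU \<longleftrightarrow> (\<exists>VH EH. subgraph VH EH VU EU \<and>
     k_isometric k VH EH EU \<and> isomorphic V E VH EH)"

definition k_iso_universal ::
  "nat \<Rightarrow> ('a set \<times> 'a set set) set \<Rightarrow> 'b set \<Rightarrow> 'b set set \<Rightarrow> bool" where
  "k_iso_universal k F VU EU \<longleftrightarrow> graph VU EU \<and>
     (\<forall>(V, E)\<in>F. k_iso_embeds k V E VU EU)"

text \<open>Minimum: fewest vertices among all k-isometric-universal graphs (on the same
vertex type; for nat this covers all finite graphs up to isomorphism).\<close>
definition min_k_iso_universal ::
  "nat \<Rightarrow> ('a set \<times> 'a set set) set \<Rightarrow> 'b set \<Rightarrow> 'b set set \<Rightarrow> bool" where
  "min_k_iso_universal k F VU EU \<longleftrightarrow> k_iso_universal k F VU EU \<and>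
     (\<forall>VU' EU'. k_iso_universal k F VU' EU' \<longrightarrow> card VU \<le> card (VU' :: 'b set))"

end

theory Submission
  imports Defs
begin

text \<open>Let k = (n - 8) div 3. Both trees are double brooms on 3k + 8 vertices: the first has a
  spine of length k + 3 with k + 2 leaves at each end, the second a spine of length k + 1 with
  k + 3 leaves at each end. Identifying their hubs and leaves gives a cycle of length 2k + 4 with
  pendant leaves, a graph on 4k + 8 vertices that contains each tree k-isometrically, because the
  rest of the cycle is an ear of length k + 1 and never a shortcut. Conversely, a tree on at most
  4k + 8 vertices containing both trees forces the two copies to share 2k + 8 vertices. Then each
  hub of the second copy has three neighbours in the first copy, which in a tree is possible only
  at a hub of the first copy. So the hubs coincide, and the tree would contain two different paths
  between them, of lengths k + 3 and k + 1.\<close>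

section \<open>Walks, distances and potentials\<close>

lemma graph_edgeD:
  assumes "graph V E" "{u, w} \<in> E"
  shows "u \<in> V" "w \<in> V" "u \<noteq> w"
proof -
  obtain a b where "a \<noteq> b" "a \<in> V" "b \<in> V" "{u, w} = {a, b}"
    using assms unfolding graph_def by meson
  then show "u \<in> V" "w \<in> V" "u \<noteq> w" by (auto simp: doubleton_eq_iff)
qed

lemma walk_append: "walk E m a b \<Longrightarrow> walk E n b c \<Longrightarrow> walk E (m + n) a c"
  by (induction m arbitrary: a) auto

lemma walk_snoc: "walk E n a b \<Longrightarrow> {b, c} \<in> E \<Longrightarrow> walk E (Suc n) a c"
  using walk_append[of E n a b 1 c] by auto

lemma walk_sym: "walk E n a b \<Longrightarrow> walk E n b a"
proof (induction n arbitrary: a)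
  case (Suc n)
  then obtain w where "{a, w} \<in> E" "walk E n w b" by auto
  with Suc.IH show ?case by (metis walk_snoc insert_commute)
qed simp

lemma walk_mono: "walk E n a b \<Longrightarrow> E \<subseteq> E' \<Longrightarrow> walk E' n a b"
  by (induction n arbitrary: a) auto

lemma walk_potential_bound:
  assumes "\<And>x y. {x, y} \<in> E \<Longrightarrow> \<phi> x \<le> \<phi> y + 1" and "walk E n a b"
  shows "\<phi> b \<le> \<phi> a + n"
  using assms(2)
proof (induction n arbitrary: a)
  case (Suc n)
  then obtain w where w: "{a, w} \<in> E" "walk E n w b" by auto
  from Suc.IH[OF w(2)] have "\<phi> b \<le> \<phi> w + n" .
  moreover have "\<phi> w \<le> \<phi> a + 1" using assms(1) w(1) by (simp add: insert_commute)
  ultimately show ?case by simp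
qed simp

lemma gdist_le_walk: "walk E n u v \<Longrightarrow> gdist E u v \<le> enat n"
  unfolding gdist_def by (auto intro: Least_le)

lemma gdist_le_enat_obtains_walk:
  assumes "gdist E u v \<le> enat k"
  obtains m where "m \<le> k" "walk E m u v" "gdist E u v = enat m"
proof -
  have ex: "\<exists>n. walk E n u v"
    using assms unfolding gdist_def by (auto split: if_splits)
  show thesis
  proof
    show "walk E (LEAST n. walk E n u v) u v" using ex by (rule LeastI_ex)
    show "gdist E u v = enat (LEAST n. walk E n u v)" using ex unfolding gdist_def by simp
    then show "(LEAST n. walk E n u v) \<le> k" using assms by simp
  qed
qed

lemma gdist_antimono:
  assumes "E \<subseteq> E'"
  shows "gdist E' u v \<le> gdist E u v"
proof (cases "\<exists>n. walk E n u v")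
  case True
  then have "walk E (LEAST n. walk E n u v) u v" by (rule LeastI_ex)
  then have "walk E' (LEAST n. walk E n u v) u v" using assms by (rule walk_mono)
  then show ?thesis using True unfolding gdist_def[of E] by (simp add: gdist_le_walk)
qed (simp add: gdist_def)

lemma k_isometric_if_potentials:
  assumes "EH \<subseteq> EU"
    and "\<And>u. u \<in> VH \<Longrightarrow> \<exists>\<phi>. \<phi> u = 0 \<and> (\<forall>x y. {x, y} \<in> EU \<longrightarrow> \<phi> x \<le> \<phi> y + 1)
           \<and> (\<forall>v\<in>VH. \<phi> v \<le> k \<longrightarrow> walk EH (\<phi> v) u v)"
  shows "k_isometric k VH EH EU"
  unfolding k_isometric_def
proof (intro ballI impI)
  fix u v assume u: "u \<in> VH" and v: "v \<in> VH" and close: "gdist EU u v \<le> enat k"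
  obtain m where "m \<le> k" and m: "walk EU m u v" and dist: "gdist EU u v = enat m"
    using close by (rule gdist_le_enat_obtains_walk)
  obtain \<phi> where "\<phi> u = 0" and lip: "\<forall>x y. {x, y} \<in> EU \<longrightarrow> \<phi> x \<le> \<phi> y + 1"
    and short: "\<forall>v\<in>VH. \<phi> v \<le> k \<longrightarrow> walk EH (\<phi> v) u v"
    using assms(2)[OF u] by blast
  have "\<phi> v \<le> m" using walk_potential_bound[OF _ m, of \<phi>] lip \<open>\<phi> u = 0\<close> by simp
  with \<open>m \<le> k\<close> short v have "walk EH (\<phi> v) u v" by simp
  then have "gdist EH u v \<le> enat (\<phi> v)" by (rule gdist_le_walk)
  also have "\<dots> \<le> gdist EU u v" using \<open>\<phi> v \<le> m\<close> dist by simp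
  finally show "gdist EH u v = gdist EU u v"
    using gdist_antimono[OF assms(1)] by (rule antisym)
qed

definition trunc_dist :: "nat \<Rightarrow> 'a set set \<Rightarrow> 'a \<Rightarrow> 'a \<Rightarrow> nat" where
  "trunc_dist k E u v = (LEAST m. m = k + 1 \<or> walk E m u v)"

lemma trunc_dist_le: "trunc_dist k E u v \<le> k + 1"
  unfolding trunc_dist_def by (rule Least_le) simp

lemma trunc_dist_self: "trunc_dist k E u u = 0"
  unfolding trunc_dist_def by (rule Least_eq_0) simp

lemma walk_trunc_dist: "trunc_dist k E u v \<le> k \<Longrightarrow> walk E (trunc_dist k E u v) u v"
  using LeastI[of "\<lambda>m. m = k + 1 \<or> walk E m u v" "k + 1"] unfolding trunc_dist_def by auto

lemma trunc_dist_edge: "{x, y} \<in> E \<Longrightarrow> trunc_dist k E u y \<le> trunc_dist k E u x + 1"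
proof (cases "trunc_dist k E u x \<le> k")
  case True
  assume "{x, y} \<in> E"
  from walk_trunc_dist[OF True] this have "walk E (Suc (trunc_dist k E u x)) u y" by (rule walk_snoc)
  then have "trunc_dist k E u y \<le> Suc (trunc_dist k E u x)"
    unfolding trunc_dist_def[of k E u y] by (rule Least_le[OF disjI2])
  then show ?thesis by simp
next
  case False
  then show ?thesis using trunc_dist_le[of k E u y] by simp
qed

lemma min_le_min_add: "(x::nat) \<le> x' + c \<Longrightarrow> y \<le> y' + c \<Longrightarrow> min x y \<le> min x' y' + c"
  by (simp add: min_def)

text \<open>The potential of a vertex is its distance from u in H truncated at k + 1; on the ear it is
  the truncated distance through the nearer end. Since the ear is longer than k, it is never a
  shortcut between vertices of H at distance at most k.\<close>
lemma k_isometric_add_ear: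
  fixes \<sigma> :: "nat \<Rightarrow> 'a"
  assumes H: "graph VH EH" "EH \<subseteq> EU"
    and ear: "EU \<subseteq> EH \<union> {{\<sigma> i, \<sigma> (Suc i)} | i. i < l}"
    and ends: "\<sigma> 0 \<in> VH" "\<sigma> l \<in> VH"
    and inner: "\<And>i. 0 < i \<Longrightarrow> i < l \<Longrightarrow> \<sigma> i \<notin> VH"
    and inj: "inj_on \<sigma> {0<..<l}"
    and long: "k < l"
  shows "k_isometric k VH EH EU"
proof (rule k_isometric_if_potentials[OF H(2)])
  fix u assume "u \<in> VH"
  define \<delta> where "\<delta> = trunc_dist k EH u"
  define \<psi> where "\<psi> = (\<lambda>i. min (k + 1) (min (\<delta> (\<sigma> 0) + i) (\<delta> (\<sigma> l) + (l - i))))"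
  define \<phi> where "\<phi> z = (if z \<in> VH then \<delta> z else \<psi> (the_inv_into {0<..<l} \<sigma> z))" for z
  have \<delta>_le: "\<delta> z \<le> k + 1" for z
    unfolding \<delta>_def by (rule trunc_dist_le)
  have \<psi>_ends: "\<psi> 0 = \<delta> (\<sigma> 0)" "\<psi> l = \<delta> (\<sigma> l)"
    using \<delta>_le[of "\<sigma> 0"] \<delta>_le[of "\<sigma> l"] long by (simp_all add: \<psi>_def min_def)
  have \<psi>_step: "\<psi> i \<le> \<psi> (Suc i) + 1" "\<psi> (Suc i) \<le> \<psi> i + 1" if "i < l" for i
    unfolding \<psi>_def using that by (intro min_le_min_add; linarith)+
  have \<phi>_ear: "\<phi> (\<sigma> i) = \<psi> i" if "i \<le> l" for i
  proof (cases "0 < i \<and> i < l")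
    case True
    then show ?thesis using inner inj by (simp add: \<phi>_def the_inv_into_f_f)
  next
    case False
    with that have "i = 0 \<or> i = l" by auto
    then show ?thesis using \<psi>_ends ends unfolding \<phi>_def by auto
  qed
  have lip: "\<phi> x \<le> \<phi> y + 1" if "{x, y} \<in> EU" for x y
  proof -
    from that ear consider "{y, x} \<in> EH" | i where "i < l" "{x, y} = {\<sigma> i, \<sigma> (Suc i)}"
      by (auto simp: insert_commute)
    then show ?thesis
    proof cases
      case 1
      then have "x \<in> VH" "y \<in> VH" using graph_edgeD[OF H(1)] by blast+
      with 1 show ?thesis unfolding \<phi>_def \<delta>_def using trunc_dist_edge by simp
    next
      case 2
      then show ?thesis using \<phi>_ear[of i] \<phi>_ear[of "Suc i"] \<psi>_step[of i]
        by (auto simp: doubleton_eq_iff)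
    qed
  qed
  have "\<phi> u = 0" using \<open>u \<in> VH\<close> by (simp add: \<phi>_def \<delta>_def trunc_dist_self)
  moreover have "walk EH (\<phi> v) u v" if "v \<in> VH" "\<phi> v \<le> k" for v
    using that by (simp add: \<phi>_def \<delta>_def walk_trunc_dist)
  ultimately show "\<exists>\<phi>. \<phi> u = 0 \<and> (\<forall>x y. {x, y} \<in> EU \<longrightarrow> \<phi> x \<le> \<phi> y + 1)
      \<and> (\<forall>v\<in>VH. \<phi> v \<le> k \<longrightarrow> walk EH (\<phi> v) u v)"
    using lip by blast
qed

section \<open>Trees given by parent functions\<close>

lemma cycle_vertex_has_two_neighbours:
  assumes "3 \<le> length xs" "distinct xs"
    and cyc: "\<forall>i < length xs. {xs ! i, xs ! ((i + 1) mod length xs)} \<in> E"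
    and "x \<in> set xs"
  obtains a b where "a \<noteq> b" "a \<in> set xs" "b \<in> set xs" "{x, a} \<in> E" "{x, b} \<in> E"
proof -
  define L where "L = length xs"
  obtain i where i: "i < L" "xs ! i = x" using assms(4) unfolding L_def by (meson in_set_conv_nth)
  define j where "j = (if i = 0 then L - 1 else i - 1)"
  have j: "j < L" "(j + 1) mod L = i" using i unfolding j_def by auto
  have i': "(i + 1) mod L < L" using i(1) by simp
  have "j \<noteq> (i + 1) mod L"
    using i assms(1) unfolding j_def L_def by (auto simp: mod_Suc)
  then have "xs ! j \<noteq> xs ! ((i + 1) mod L)"
    using assms(2) j(1) i' unfolding L_def by (simp add: nth_eq_iff_index_eq)
  moreover have "xs ! j \<in> set xs" "xs ! ((i + 1) mod L) \<in> set xs"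
    using j(1) i' unfolding L_def by simp_all
  moreover have "{x, xs ! j} \<in> E"
  proof -
    have "{xs ! j, xs ! ((j + 1) mod L)} \<in> E" using cyc j(1) unfolding L_def by blast
    then show ?thesis using j(2) i(2) by (simp add: insert_commute)
  qed
  moreover have "{x, xs ! ((i + 1) mod L)} \<in> E" using cyc i unfolding L_def by blast
  ultimately show thesis by (rule that)
qed

definition parent_edges :: "'a set \<Rightarrow> 'a \<Rightarrow> ('a \<Rightarrow> 'a) \<Rightarrow> 'a set set" where
  "parent_edges V r par = (\<lambda>v. {v, par v}) ` (V - {r})"

lemma mem_parent_edges:
  "{x, y} \<in> parent_edges V r par \<longleftrightarrow> (x \<in> V \<and> x \<noteq> r \<and> y = par x) \<or> (y \<in> V \<and> y \<noteq> r \<and> x = par y)"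
  by (auto simp: parent_edges_def doubleton_eq_iff)

context
  fixes V :: "'a set" and r :: 'a and par :: "'a \<Rightarrow> 'a" and rank :: "'a \<Rightarrow> nat"
  assumes finite: "finite V" and root: "r \<in> V"
    and parent: "\<And>v. v \<in> V \<Longrightarrow> v \<noteq> r \<Longrightarrow> par v \<in> V \<and> rank (par v) < rank v"
begin

lemma graph_parent_edges: "graph V (parent_edges V r par)"
  unfolding graph_def parent_edges_def using finite parent by fastforce

lemma walk_parent_edges_to_root: "v \<in> V \<Longrightarrow> \<exists>n. walk (parent_edges V r par) n v r"
proof (induction "rank v" arbitrary: v rule: less_induct)
  case less
  show ?case
  proof (cases "v = r")
    case False
    with less.prems parent obtain n where "walk (parent_edges V r par) n (par v) r"
      using less.hyps by blast
    moreover have "{v, par v} \<in> parent_edges V r par"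
      using less.prems False by (simp add: mem_parent_edges)
    ultimately show ?thesis by (meson walk.simps(2))
  qed (meson walk.simps(1))
qed

lemma connected_parent_edges: "connected_graph V (parent_edges V r par)"
  unfolding connected_graph_def
proof (intro ballI)
  fix u v assume "u \<in> V" "v \<in> V"
  then obtain m n where "walk (parent_edges V r par) m u r" "walk (parent_edges V r par) n v r"
    using walk_parent_edges_to_root by blast
  then have "walk (parent_edges V r par) (m + n) u v" using walk_append walk_sym by fast
  then show "\<exists>n. walk (parent_edges V r par) n u v" ..
qed

text \<open>On a cycle, the vertex of largest rank would need two distinct parents.\<close>
lemma parent_edges_acyclic: "\<not> has_cycle V (parent_edges V r par)"
proof
  assume "has_cycle V (parent_edges V r par)"
  then obtain xs where xs: "3 \<le> length xs" "distinct xs" "set xs \<subseteq> V"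
    and cyc: "\<forall>i < length xs. {xs ! i, xs ! ((i + 1) mod length xs)} \<in> parent_edges V r par"
    unfolding has_cycle_def by blast
  have "Max (rank ` set xs) \<in> rank ` set xs" using xs(1) by (intro Max_in) auto
  then obtain x where x: "x \<in> set xs" "rank x = Max (rank ` set xs)" by auto
  have parent_of_x: "par x = y" if "y \<in> set xs" "{x, y} \<in> parent_edges V r par" for y
  proof (rule ccontr)
    assume "par x \<noteq> y"
    then have "y \<in> V" "y \<noteq> r" "x = par y" using that(2) by (auto simp: mem_parent_edges)
    then have "rank x < rank y" using parent by blast
    moreover have "rank y \<le> rank x" using that(1) x(2) by simp
    ultimately show False by simp
  qed
  obtain a b where "a \<noteq> b" "a \<in> set xs" "b \<in> set xs"
    and "{x, a} \<in> parent_edges V r par" "{x, b} \<in> parent_edges V r par"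
    using cycle_vertex_has_two_neighbours[OF xs(1,2) cyc x(1)] .
  then have "par x = a" "par x = b" by (blast intro: parent_of_x)+
  with \<open>a \<noteq> b\<close> show False by simp
qed

lemma is_tree_parent_edges: "is_tree V (parent_edges V r par)"
  unfolding is_tree_def
  using graph_parent_edges connected_parent_edges parent_edges_acyclic root by blast

end

section \<open>Paths in forests\<close>

abbreviation walk_list :: "'a set set \<Rightarrow> 'a list \<Rightarrow> bool" where
  "walk_list E \<equiv> successively (\<lambda>x y. {x, y} \<in> E)"

definition path_between :: "'a set set \<Rightarrow> 'a \<Rightarrow> 'a \<Rightarrow> 'a list \<Rightarrow> bool" where
  "path_between E u v xs \<longleftrightarrow> walk_list E xs \<and> distinct xs \<and> xs \<noteq> [] \<and> hd xs = u \<and> last xs = v"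

lemma walk_list_mono: "walk_list E xs \<Longrightarrow> E \<subseteq> E' \<Longrightarrow> walk_list E' xs"
  by (erule successively_mono) blast

lemma path_between_rev: "path_between E u v xs \<Longrightarrow> path_between E v u (rev xs)"
  by (simp add: path_between_def hd_rev last_rev insert_commute)

lemma path_between_map:
  assumes "path_between E u v xs" "inj_on f (set xs)"
    and "\<And>x y. x \<in> set xs \<Longrightarrow> y \<in> set xs \<Longrightarrow> {x, y} \<in> E \<Longrightarrow> {f x, f y} \<in> E'"
  shows "path_between E' (f u) (f v) (map f xs)"
  using assms unfolding path_between_def
  by (auto simp: successively_map distinct_map hd_map last_map elim: successively_mono)

lemma walk_imp_path_between:
  assumes "graph V E" "u \<in> V" "walk E n u v"
  shows "\<exists>xs. path_between E u v xs \<and> set xs \<subseteq> V"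
  using assms(2,3)
proof (induction n arbitrary: u)
  case 0
  then show ?case by (intro exI[of _ "[u]"]) (simp add: path_between_def)
next
  case (Suc n)
  then obtain w where w: "{u, w} \<in> E" "walk E n w v" by auto
  with assms(1) have "w \<in> V" by (blast dest: graph_edgeD)
  with Suc.IH w(2) obtain ys where ys: "path_between E w v ys" "set ys \<subseteq> V" by blast
  show ?case
  proof (cases "u \<in> set ys")
    case True
    then obtain as bs where "ys = as @ u # bs" by (meson split_list)
    with ys show ?thesis
      by (intro exI[of _ "u # bs"]) (auto simp: path_between_def successively_append_iff)
  next
    case False
    with ys w(1) Suc.prems(1) show ?thesis
      by (intro exI[of _ "u # ys"]) (auto simp: path_between_def successively_Cons)
  qed
qed

lemma has_cycle_of_walk_list:
  assumes "walk_list E xs" "distinct xs" "3 \<le> length xs" "set xs \<subseteq> V" "{last xs, hd xs} \<in> E"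
  shows "has_cycle V E"
  unfolding has_cycle_def
proof (intro exI conjI allI impI)
  fix i assume i: "i < length xs"
  show "{xs ! i, xs ! ((i + 1) mod length xs)} \<in> E"
  proof (cases "Suc i < length xs")
    case True
    then show ?thesis using successively_nth[OF assms(1) True] by simp
  next
    case False
    with i have "i = length xs - 1" by simp
    moreover have "xs \<noteq> []" using assms(3) by auto
    ultimately show ?thesis using assms(5) by (simp add: last_conv_nth hd_conv_nth)
  qed
qed (use assms in auto)

lemma has_cycle_of_two_paths:
  assumes "walk_list E (u # p @ [w])" "walk_list E (u # q @ [w])"
    and "distinct (u # p @ [w])" "distinct (u # q @ [w])" "set p \<inter> set q = {}" "p \<noteq> q"
    and "set (u # p @ w # q) \<subseteq> V"
  shows "has_cycle V E"
proof (rule has_cycle_of_walk_list)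
  let ?c = "(u # p @ [w]) @ rev q"
  have q: "walk_list E q" "q \<noteq> [] \<Longrightarrow> {u, hd q} \<in> E \<and> {last q, w} \<in> E"
    using assms(2) by (auto simp: successively_append_iff successively_Cons)
  show "walk_list E ?c"
    unfolding successively_append_iff[of _ "u # p @ [w]" "rev q"]
    using assms(1) q by (auto simp: hd_rev insert_commute)
  show "{last ?c, hd ?c} \<in> E"
    using assms(2) q(2) by (cases q) (auto simp: last_rev insert_commute)
  show "distinct ?c" using assms(3-5) by auto
  show "3 \<le> length ?c" using assms(6) by (cases p; cases q) auto
  show "set ?c \<subseteq> V" using assms(7) by auto
qed

lemma walk_list_prefix: "walk_list E (xs @ ys) \<Longrightarrow> walk_list E xs"
  by (simp add: successively_append_iff)

lemma has_cycle_of_diverging_paths: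
  assumes paths: "path_between E u v (u # xs)" "path_between E u v (u # ys)"
    and diverge: "xs \<noteq> []" "ys \<noteq> []" "hd xs \<noteq> hd ys"
    and "set xs \<subseteq> V" "set ys \<subseteq> V" "u \<in> V"
  shows "has_cycle V E"
proof -
  have "last xs \<in> set ys" using paths diverge(1,2) unfolding path_between_def by (metis last_ConsR last_in_set)
  then have "\<exists>y\<in>set xs. y \<in> set ys" using diverge(1) by auto
  then obtain p w s where xs: "xs = p @ w # s" and "w \<in> set ys" and p: "\<forall>y\<in>set p. y \<notin> set ys"
    using split_list_first_prop[of xs "\<lambda>y. y \<in> set ys"] by blast
  then obtain q t where ys: "ys = q @ w # t" by (meson split_list)
  show ?thesis
  proof (rule has_cycle_of_two_paths)
    show "walk_list E (u # p @ [w])"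
      using paths(1) walk_list_prefix[of E "u # p @ [w]" s] unfolding xs path_between_def by simp
    show "walk_list E (u # q @ [w])"
      using paths(2) walk_list_prefix[of E "u # q @ [w]" t] unfolding ys path_between_def by simp
    show "distinct (u # p @ [w])" "distinct (u # q @ [w])"
      using paths unfolding xs ys path_between_def by auto
    show "set p \<inter> set q = {}" using p unfolding ys by auto
    then show "p \<noteq> q" using diverge(3) unfolding xs ys by (cases p) auto
    show "set (u # p @ w # q) \<subseteq> V" using assms(6-8) unfolding xs ys by auto
  qed
qed

lemma path_between_unique:
  assumes acyclic: "\<not> has_cycle V E"
  shows "path_between E u v xs \<Longrightarrow> path_between E u v ys \<Longrightarrow> set xs \<subseteq> V \<Longrightarrow> set ys \<subseteq> V
    \<Longrightarrow> xs = ys"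
proof (induction xs arbitrary: u ys)
  case Nil
  then show ?case by (simp add: path_between_def)
next
  case (Cons x xs)
  then have [simp]: "x = u" by (simp add: path_between_def)
  from Cons.prems(2) obtain ys' where ys: "ys = u # ys'"
    by (cases ys) (auto simp: path_between_def)
  show ?case
  proof (cases "xs = [] \<or> ys' = []")
    case True
    then show ?thesis using Cons.prems(1,2) unfolding ys path_between_def
      by (auto split: if_split_asm dest: last_in_set)
  next
    case False
    then have tails: "path_between E (hd xs) v xs" "path_between E (hd ys') v ys'"
      using Cons.prems(1,2) unfolding ys path_between_def by (auto simp: successively_Cons)
    show ?thesis
    proof (cases "hd xs = hd ys'")
      case True
      with Cons.IH tails Cons.prems(3,4) show ?thesis unfolding ys by auto
    next
      case diverge: False
      have "has_cycle V E"
        using has_cycle_of_diverging_paths[of E u v xs ys' V] Cons.prems False diverge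
        unfolding ys by simp
      with acyclic show ?thesis by contradiction
    qed
  qed
qed

text \<open>The path a, x, b is the only path from a to b in the forest, so it is also the path
  inside the subtree.\<close>
lemma forest_common_neighbour:
  assumes forest: "graph VU EU" "\<not> has_cycle VU EU"
    and sub: "subgraph VH EH VU EU" "connected_graph VH EH"
    and ab: "a \<in> VH" "b \<in> VH" "a \<noteq> b" "{x, a} \<in> EU" "{x, b} \<in> EU"
  shows "x \<in> VH" "{x, a} \<in> EH"
proof -
  have H: "graph VH EH" "VH \<subseteq> VU" "EH \<subseteq> EU" using sub(1) unfolding subgraph_def by auto
  obtain n where "walk EH n a b" using sub(2) ab(1,2) unfolding connected_graph_def by blast
  then obtain xs where xs: "path_between EH a b xs" "set xs \<subseteq> VH"
    using walk_imp_path_between[OF H(1) ab(1)] by blast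
  have "x \<noteq> a" "x \<noteq> b" "x \<in> VU" using graph_edgeD[OF forest(1)] ab(4,5) by blast+
  then have "path_between EU a b [a, x, b]"
    using ab(3-5) by (simp add: path_between_def insert_commute)
  moreover have "path_between EU a b xs"
    using xs(1) walk_list_mono[OF _ H(3)] unfolding path_between_def by blast
  moreover have "set [a, x, b] \<subseteq> VU" using \<open>x \<in> VU\<close> ab(1,2) H(2) by auto
  ultimately have "xs = [a, x, b]"
    using path_between_unique[OF forest(2)] xs(2) H(2) by blast
  then show "x \<in> VH" "{x, a} \<in> EH"
    using xs unfolding path_between_def by (auto simp: insert_commute)
qed

definition nbrs :: "'a set set \<Rightarrow> 'a \<Rightarrow> 'a set" where
  "nbrs E x = {y. {x, y} \<in> E}"

lemma forest_nbrs_in_subtree: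
  assumes forest: "graph VU EU" "\<not> has_cycle VU EU"
    and sub: "subgraph VH EH VU EU" "connected_graph VH EH"
    and two: "2 \<le> card (nbrs EU x \<inter> VH)"
  shows "x \<in> VH" "nbrs EU x \<inter> VH \<subseteq> nbrs EH x"
proof -
  let ?S = "nbrs EU x \<inter> VH"
  have "finite ?S" using two by (intro card_ge_0_finite) simp
  with two obtain a b where ab: "a \<in> ?S" "b \<in> ?S" "a \<noteq> b"
    using card_le_Suc0_iff_eq[of ?S] by (metis not_less_eq_eq numeral_2_eq_2)
  have adj: "y \<in> VH" "{x, y} \<in> EU" if "y \<in> ?S" for y
    using that by (auto simp: nbrs_def)
  show "x \<in> VH"
    using forest_common_neighbour(1)[OF forest sub adj(1)[OF ab(1)] adj(1)[OF ab(2)] ab(3)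
        adj(2)[OF ab(1)] adj(2)[OF ab(2)]] .
  show "?S \<subseteq> nbrs EH x"
  proof
    fix c assume c: "c \<in> ?S"
    from ab obtain d where d: "d \<in> ?S" "c \<noteq> d" by blast
    have "{x, c} \<in> EH"
      using forest_common_neighbour(2)[OF forest sub adj(1)[OF c] adj(1)[OF d(1)] d(2)
          adj(2)[OF c] adj(2)[OF d(1)]] .
    then show "c \<in> nbrs EH x" by (simp add: nbrs_def)
  qed
qed

definition is_iso :: "('a \<Rightarrow> 'b) \<Rightarrow> 'a set \<Rightarrow> 'a set set \<Rightarrow> 'b set \<Rightarrow> 'b set set \<Rightarrow> bool" where
  "is_iso f V E V' E' \<longleftrightarrow> bij_betw f V V' \<and> (\<forall>u\<in>V. \<forall>v\<in>V. {u, v} \<in> E \<longleftrightarrow> {f u, f v} \<in> E')"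

lemma isomorphic_iff_is_iso: "isomorphic V E V' E' \<longleftrightarrow> (\<exists>f. is_iso f V E V' E')"
  by (simp add: isomorphic_def is_iso_def)

lemma walk_is_iso:
  assumes "is_iso f V E V' E'" "graph V E" "u \<in> V" "walk E n u v"
  shows "walk E' n (f u) (f v)"
  using assms(3,4)
proof (induction n arbitrary: u)
  case (Suc n)
  then obtain w where w: "{u, w} \<in> E" "walk E n w v" by auto
  with assms(2) have "w \<in> V" by (blast dest: graph_edgeD)
  with assms(1) Suc w show ?case by (auto simp: is_iso_def)
qed simp

lemma connected_is_iso:
  assumes "is_iso f V E V' E'" "graph V E" "connected_graph V E"
  shows "connected_graph V' E'"
  unfolding connected_graph_def
proof (intro ballI)
  fix a b assume "a \<in> V'" "b \<in> V'"
  then obtain u v where "u \<in> V" "v \<in> V" "a = f u" "b = f v"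
    using assms(1) unfolding is_iso_def bij_betw_def by blast
  with assms show "\<exists>n. walk E' n a b"
    unfolding connected_graph_def by (blast intro: walk_is_iso)
qed

lemma path_between_is_iso:
  assumes "is_iso f V E V' E'" "E' \<subseteq> EU" "path_between E u v xs" "set xs \<subseteq> V"
  shows "path_between EU (f u) (f v) (map f xs)"
proof (rule path_between_map[OF assms(3)])
  show "inj_on f (set xs)"
    using assms(1,4) unfolding is_iso_def bij_betw_def by (blast intro: inj_on_subset)
  show "{f x, f y} \<in> EU" if "x \<in> set xs" "y \<in> set xs" "{x, y} \<in> E" for x y
    using assms(1,2,4) that unfolding is_iso_def by blast
qed

lemma nbrs_is_iso:
  assumes "is_iso f V E V' E'" "graph V E" "graph V' E'" "z \<in> V"
  shows "nbrs E' (f z) = f ` nbrs E z"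
proof
  show "f ` nbrs E z \<subseteq> nbrs E' (f z)"
    using assms by (auto simp: nbrs_def is_iso_def dest: graph_edgeD)
  show "nbrs E' (f z) \<subseteq> f ` nbrs E z"
  proof
    fix y' assume "y' \<in> nbrs E' (f z)"
    then have "y' \<in> V'" "{f z, y'} \<in> E'" using assms(3) by (auto simp: nbrs_def dest: graph_edgeD)
    moreover obtain y where "y \<in> V" "y' = f y"
      using \<open>y' \<in> V'\<close> assms(1) unfolding is_iso_def bij_betw_def by blast
    ultimately show "y' \<in> f ` nbrs E z" using assms(1,4) by (auto simp: nbrs_def is_iso_def)
  qed
qed

section \<open>Two double brooms\<close>

text \<open>Both trees have hubs 0 and k + 3, with the leaves 2k + 4, ..., 3k + 5 at hub 0 and
  3k + 6, ..., 4k + 7 at hub k + 3. The first tree joins the hubs by the spine 0, 1, ..., k + 3;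
  the second by the spine 0, 2k + 3, 2k + 2, ..., k + 3 (enumerated by tree2_spine) and has 1 and
  k + 2 as further leaves. Together they form the cycle 0, 1, ..., 2k + 3 with pendant leaves.
  The ranks are the depths below the root 0.\<close>

definition tree1_verts :: "nat \<Rightarrow> nat set" where
  "tree1_verts k = {..k + 3} \<union> {2 * k + 4..<4 * k + 8}"

definition tree1_parent :: "nat \<Rightarrow> nat \<Rightarrow> nat" where
  "tree1_parent k v = (if v \<le> k + 3 then v - 1 else if v < 3 * k + 6 then 0 else k + 3)"

definition tree1_rank :: "nat \<Rightarrow> nat \<Rightarrow> nat" where
  "tree1_rank k v = (if v \<le> k + 3 then v else if v < 3 * k + 6 then 1 else k + 4)"

definition tree1_edges :: "nat \<Rightarrow> nat set set" where
  "tree1_edges k = parent_edges (tree1_verts k) 0 (tree1_parent k)"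

definition tree2_verts :: "nat \<Rightarrow> nat set" where
  "tree2_verts k = {0, 1} \<union> {k + 2..<4 * k + 8}"

definition tree2_parent :: "nat \<Rightarrow> nat \<Rightarrow> nat" where
  "tree2_parent k v = (if v = 1 then 0 else if v = k + 2 then k + 3 else if v = 2 * k + 3 then 0
     else if v < 2 * k + 3 then v + 1 else if v < 3 * k + 6 then 0 else k + 3)"

definition tree2_rank :: "nat \<Rightarrow> nat \<Rightarrow> nat" where
  "tree2_rank k v = (if v = 0 then 0 else if v = 1 then 1 else if v = k + 2 then k + 2
     else if v \<le> 2 * k + 3 then 2 * k + 4 - v else if v < 3 * k + 6 then 1 else k + 2)"

definition tree2_edges :: "nat \<Rightarrow> nat set set" where
  "tree2_edges k = parent_edges (tree2_verts k) 0 (tree2_parent k)"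

definition tree2_spine :: "nat \<Rightarrow> nat \<Rightarrow> nat" where
  "tree2_spine k i = (if i = 0 then 0 else 2 * k + 4 - i)"

lemma is_tree_tree1: "is_tree (tree1_verts k) (tree1_edges k)"
  unfolding tree1_edges_def
  by (rule is_tree_parent_edges[where rank = "tree1_rank k"])
    (auto simp: tree1_verts_def tree1_parent_def tree1_rank_def)

lemma is_tree_tree2: "is_tree (tree2_verts k) (tree2_edges k)"
  unfolding tree2_edges_def
  by (rule is_tree_parent_edges[where rank = "tree2_rank k"])
    (auto simp: tree2_verts_def tree2_parent_def tree2_rank_def)

lemma card_tree1_verts: "card (tree1_verts k) = 3 * k + 8"
proof -
  have "card (tree1_verts k) = card {..k + 3} + card {2 * k + 4..<4 * k + 8}"
    unfolding tree1_verts_def by (rule card_Un_disjoint) auto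
  then show ?thesis by simp
qed

lemma card_tree2_verts: "card (tree2_verts k) = 3 * k + 8"
proof -
  have "card (tree2_verts k) = card {0::nat, 1} + card {k + 2..<4 * k + 8}"
    unfolding tree2_verts_def by (rule card_Un_disjoint) auto
  then show ?thesis by simp
qed

lemma card_nbrs_tree1_le:
  assumes "z \<notin> {0, k + 3}"
  shows "card (nbrs (tree1_edges k) z) \<le> 2"
proof -
  have "nbrs (tree1_edges k) z \<subseteq> {tree1_parent k z, z + 1}"
    using assms by (auto simp: nbrs_def tree1_edges_def mem_parent_edges tree1_parent_def split: if_splits)
  then have "card (nbrs (tree1_edges k) z) \<le> card {tree1_parent k z, z + 1}"
    by (intro card_mono) auto
  also have "\<dots> \<le> 2" by (simp add: card_insert_if)
  finally show ?thesis .
qed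

lemma tree2_hub_leaves:
  "insert 1 {2 * k + 4..<3 * k + 6} \<subseteq> nbrs (tree2_edges k) 0"
  "insert (k + 2) {3 * k + 6..<4 * k + 8} \<subseteq> nbrs (tree2_edges k) (k + 3)"
  by (auto simp: nbrs_def tree2_edges_def mem_parent_edges tree2_verts_def tree2_parent_def)

lemma path_tree1_spine: "path_between (tree1_edges k) 0 (k + 3) [0..<k + 4]"
proof -
  have "{i, Suc i} \<in> tree1_edges k" if "i < k + 3" for i
    using that by (auto simp: tree1_edges_def mem_parent_edges tree1_verts_def tree1_parent_def)
  then show ?thesis
    by (auto simp: path_between_def successively_conv_nth)
qed

lemma path_tree2_spine: "path_between (tree2_edges k) 0 (k + 3) (map (tree2_spine k) [0..<k + 2])"
proof -
  have "{tree2_spine k i, tree2_spine k (Suc i)} \<in> tree2_edges k" if "i < k + 1" for i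
    using that by (auto simp: tree2_edges_def mem_parent_edges tree2_verts_def tree2_parent_def tree2_spine_def)
  moreover have "inj_on (tree2_spine k) {0..<k + 2}"
    by (auto simp: inj_on_def tree2_spine_def)
  ultimately show ?thesis
    by (auto simp: path_between_def successively_map successively_conv_nth distinct_map hd_map last_map
        tree2_spine_def simp del: upt_Suc)
qed

section \<open>A universal graph on 4k + 8 vertices\<close>

definition univ_verts :: "nat \<Rightarrow> nat set" where
  "univ_verts k = {..<4 * k + 8}"

definition univ_edges :: "nat \<Rightarrow> nat set set" where
  "univ_edges k = tree1_edges k \<union> tree2_edges k"

lemma graph_Un:
  assumes "graph V E" "graph V' E'"
  shows "graph (V \<union> V') (E \<union> E')"
  unfolding graph_def
proof (intro conjI ballI)
  show "finite (V \<union> V')" using assms by (simp add: graph_def)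
next
  fix e assume "e \<in> E \<union> E'"
  then consider "e \<in> E" | "e \<in> E'" by blast
  then obtain u v where "u \<noteq> v" "u \<in> V \<union> V'" "v \<in> V \<union> V'" "e = {u, v}"
    by cases (use assms in \<open>force simp: graph_def\<close>)+
  then show "\<exists>u v. u \<noteq> v \<and> u \<in> V \<union> V' \<and> v \<in> V \<union> V' \<and> e = {u, v}" by blast
qed

lemma graph_univ: "graph (univ_verts k) (univ_edges k)"
proof -
  have "graph (tree1_verts k \<union> tree2_verts k) (univ_edges k)"
    unfolding univ_edges_def using is_tree_tree1 is_tree_tree2 by (intro graph_Un) (simp_all add: is_tree_def)
  moreover have "tree1_verts k \<union> tree2_verts k = univ_verts k"
    by (auto simp: tree1_verts_def tree2_verts_def univ_verts_def)
  ultimately show ?thesis by simp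
qed

lemma tree2_edges_subset:
  "tree2_edges k \<subseteq> tree1_edges k \<union> {{tree2_spine k i, tree2_spine k (Suc i)} | i. i < k + 1}"
proof
  fix e assume "e \<in> tree2_edges k"
  then obtain v where v: "v \<in> tree2_verts k" "v \<noteq> 0" "e = {v, tree2_parent k v}"
    unfolding tree2_edges_def parent_edges_def by blast
  show "e \<in> tree1_edges k \<union> {{tree2_spine k i, tree2_spine k (Suc i)} | i. i < k + 1}"
  proof (cases "k + 3 \<le> v \<and> v \<le> 2 * k + 3")
    case True
    then have "e = {tree2_spine k (2 * k + 3 - v), tree2_spine k (Suc (2 * k + 3 - v))}"
      using v by (auto simp: tree2_spine_def tree2_parent_def insert_commute)
    with True show ?thesis by auto
  next
    case False
    with v have "e \<in> tree1_edges k"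
      by (auto simp: tree1_edges_def mem_parent_edges tree1_verts_def tree1_parent_def
          tree2_verts_def tree2_parent_def)
    then show ?thesis ..
  qed
qed

lemma tree1_edges_subset: "tree1_edges k \<subseteq> tree2_edges k \<union> {{Suc i, Suc (Suc i)} | i. i < k + 1}"
proof
  fix e assume "e \<in> tree1_edges k"
  then obtain v where v: "v \<in> tree1_verts k" "v \<noteq> 0" "e = {v, tree1_parent k v}"
    unfolding tree1_edges_def parent_edges_def by blast
  show "e \<in> tree2_edges k \<union> {{Suc i, Suc (Suc i)} | i. i < k + 1}"
  proof (cases "2 \<le> v \<and> v \<le> k + 2")
    case True
    then have "e = {Suc (v - 2), Suc (Suc (v - 2))}"
      using v by (auto simp: tree1_parent_def insert_commute)
    with True show ?thesis by auto
  next
    case False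
    with v have "e \<in> tree2_edges k"
      by (auto simp: tree2_edges_def mem_parent_edges tree1_verts_def tree1_parent_def
          tree2_verts_def tree2_parent_def)
    then show ?thesis ..
  qed
qed

lemma k_isometric_tree1_univ: "k_isometric k (tree1_verts k) (tree1_edges k) (univ_edges k)"
proof (rule k_isometric_add_ear[where \<sigma> = "tree2_spine k" and l = "k + 1"])
  show "graph (tree1_verts k) (tree1_edges k)" using is_tree_tree1 by (simp add: is_tree_def)
  show "univ_edges k \<subseteq> tree1_edges k \<union> {{tree2_spine k i, tree2_spine k (Suc i)} | i. i < k + 1}"
    using tree2_edges_subset unfolding univ_edges_def by blast
  show "inj_on (tree2_spine k) {0<..<k + 1}" by (auto simp: inj_on_def tree2_spine_def)
qed (auto simp: univ_edges_def tree2_spine_def tree1_verts_def)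

lemma k_isometric_tree2_univ: "k_isometric k (tree2_verts k) (tree2_edges k) (univ_edges k)"
proof (rule k_isometric_add_ear[where \<sigma> = Suc and l = "k + 1"])
  show "graph (tree2_verts k) (tree2_edges k)" using is_tree_tree2 by (simp add: is_tree_def)
  show "univ_edges k \<subseteq> tree2_edges k \<union> {{Suc i, Suc (Suc i)} | i. i < k + 1}"
    using tree1_edges_subset unfolding univ_edges_def by blast
qed (auto simp: univ_edges_def tree2_verts_def)

lemma k_iso_embeds_subgraph:
  assumes "subgraph V E VU EU" "k_isometric k V E EU"
  shows "k_iso_embeds k V E VU EU"
proof -
  have "is_iso id V E V E" by (simp add: is_iso_def)
  with assms show ?thesis unfolding k_iso_embeds_def isomorphic_iff_is_iso by blast
qed

lemma k_iso_universal_univ: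
  "k_iso_universal k {(tree1_verts k, tree1_edges k), (tree2_verts k, tree2_edges k)}
     (univ_verts k) (univ_edges k)"
proof -
  have "subgraph (tree1_verts k) (tree1_edges k) (univ_verts k) (univ_edges k)"
    "subgraph (tree2_verts k) (tree2_edges k) (univ_verts k) (univ_edges k)"
    using is_tree_tree1 is_tree_tree2
    by (auto simp: subgraph_def is_tree_def univ_edges_def univ_verts_def tree1_verts_def tree2_verts_def)
  then have "k_iso_embeds k (tree1_verts k) (tree1_edges k) (univ_verts k) (univ_edges k)"
    "k_iso_embeds k (tree2_verts k) (tree2_edges k) (univ_verts k) (univ_edges k)"
    using k_isometric_tree1_univ k_isometric_tree2_univ by (blast intro: k_iso_embeds_subgraph)+
  with graph_univ show ?thesis unfolding k_iso_universal_def by simp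
qed

section \<open>No universal tree on 4k + 8 vertices\<close>

context
  fixes k :: nat and VU :: "'a set" and EU VH1 EH1 VH2 EH2 and f1 f2 :: "nat \<Rightarrow> 'a"
  assumes forest: "graph VU EU" "\<not> has_cycle VU EU"
    and small: "card VU \<le> 4 * k + 8"
    and copy1: "subgraph VH1 EH1 VU EU" "is_iso f1 (tree1_verts k) (tree1_edges k) VH1 EH1"
    and copy2: "subgraph VH2 EH2 VU EU" "is_iso f2 (tree2_verts k) (tree2_edges k) VH2 EH2"
begin

lemma card_copies: "card VH1 = 3 * k + 8" "card VH2 = 3 * k + 8"
  using copy1(2) copy2(2) card_tree1_verts card_tree2_verts
  by (metis bij_betw_same_card is_iso_def)+

lemma copies_overlap: "2 * k + 8 \<le> card (VH1 \<inter> VH2)"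
proof -
  have "VH1 \<subseteq> VU" "VH2 \<subseteq> VU" using copy1(1) copy2(1) by (simp_all add: subgraph_def)
  moreover have "finite VU" using forest(1) by (simp add: graph_def)
  ultimately have "card VH1 + card VH2 = card (VH1 \<union> VH2) + card (VH1 \<inter> VH2)"
    "card (VH1 \<union> VH2) \<le> card VU"
    by (auto intro: card_Un_Int card_mono dest: finite_subset)
  then show ?thesis using small card_copies by linarith
qed

lemma copy1_is_subtree:
  "graph VH1 EH1" "VH1 \<subseteq> VU" "EH1 \<subseteq> EU" "finite VH1" "connected_graph VH1 EH1"
proof -
  show H: "graph VH1 EH1" "VH1 \<subseteq> VU" "EH1 \<subseteq> EU" using copy1(1) by (simp_all add: subgraph_def)
  then show "finite VH1" by (simp add: graph_def)
  show "connected_graph VH1 EH1"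
    using connected_is_iso[OF copy1(2)] is_tree_tree1 by (simp add: is_tree_def)
qed

lemma copy1_hub_if_three_nbrs:
  assumes three: "3 \<le> card (nbrs EU x \<inter> VH1)"
  shows "x \<in> f1 ` {0, k + 3}"
proof -
  have "x \<in> VH1" and sub: "nbrs EU x \<inter> VH1 \<subseteq> nbrs EH1 x"
    using forest_nbrs_in_subtree[OF forest copy1(1) copy1_is_subtree(5)] three by simp_all
  then obtain z where z: "z \<in> tree1_verts k" "x = f1 z"
    using copy1(2) unfolding is_iso_def bij_betw_def by blast
  have T1: "graph (tree1_verts k) (tree1_edges k)" using is_tree_tree1 by (simp add: is_tree_def)
  have "nbrs EH1 x \<subseteq> VH1" using copy1_is_subtree(1) by (auto simp: nbrs_def dest: graph_edgeD)
  then have "3 \<le> card (nbrs EH1 x)"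
    using three sub copy1_is_subtree(4) by (meson card_mono finite_subset le_trans)
  also have "nbrs EH1 x = f1 ` nbrs (tree1_edges k) z"
    using nbrs_is_iso[OF copy1(2) T1 copy1_is_subtree(1) z(1)] z(2) by simp
  also have "card \<dots> \<le> card (nbrs (tree1_edges k) z)"
  proof (rule card_image_le)
    have "nbrs (tree1_edges k) z \<subseteq> tree1_verts k" using T1 by (auto simp: nbrs_def dest: graph_edgeD)
    then show "finite (nbrs (tree1_edges k) z)" by (rule finite_subset) (simp add: tree1_verts_def)
  qed
  finally have "z \<in> {0, k + 3}" using card_nbrs_tree1_le by fastforce
  with z(2) show ?thesis by blast
qed

text \<open>Here the counting enters: the copies share at least 2k + 8 vertices, while the second
  tree has only 2k + 5 vertices outside L.\<close>
lemma card_nbrs_tree2_hub_in_copy1: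
  assumes L: "L \<subseteq> nbrs (tree2_edges k) c" "card L = k + 3"
  shows "3 \<le> card (nbrs EU (f2 c) \<inter> VH1)"
proof -
  have T2: "graph (tree2_verts k) (tree2_edges k)" using is_tree_tree2 by (simp add: is_tree_def)
  have H2: "VH2 \<subseteq> VU" "EH2 \<subseteq> EU" using copy2(1) by (simp_all add: subgraph_def)
  have fin: "finite VH2" "finite VH1"
    using H2(1) copy1_is_subtree(2) forest(1) by (auto simp: graph_def intro: finite_subset)
  have "L \<noteq> {}" using L(2) by auto
  then have c: "c \<in> tree2_verts k" and L_sub: "L \<subseteq> tree2_verts k"
    using L(1) by (auto simp: nbrs_def dest: graph_edgeD[OF T2])
  define A where "A = f2 ` L"
  have "inj_on f2 L" using copy2(2) L_sub unfolding is_iso_def bij_betw_def by (blast intro: inj_on_subset)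
  then have card_A: "card A = k + 3" unfolding A_def using L(2) by (simp add: card_image)
  have A_sub: "A \<subseteq> VH2" using copy2(2) L_sub unfolding A_def is_iso_def bij_betw_def by blast
  have A_nbrs: "A \<subseteq> nbrs EU (f2 c)"
  proof
    fix a assume "a \<in> A"
    then obtain l where l: "l \<in> L" "a = f2 l" unfolding A_def by blast
    then have "{c, l} \<in> tree2_edges k" using L(1) by (auto simp: nbrs_def)
    then have "{f2 c, f2 l} \<in> EH2" using copy2(2) c L_sub l(1) unfolding is_iso_def by blast
    then show "a \<in> nbrs EU (f2 c)" using H2(2) l(2) by (auto simp: nbrs_def)
  qed
  have "card (VH1 \<inter> VH2) \<le> card ((A \<inter> VH1) \<union> (VH2 - A))"
    using fin by (intro card_mono) auto
  also have "\<dots> \<le> card (A \<inter> VH1) + card (VH2 - A)" by (rule card_Un_le)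
  also have "card (VH2 - A) = 2 * k + 5"
    using card_Diff_subset[OF finite_subset[OF A_sub fin(1)] A_sub] card_A card_copies(2) by simp
  finally have "3 \<le> card (A \<inter> VH1)" using copies_overlap by linarith
  also have "\<dots> \<le> card (nbrs EU (f2 c) \<inter> VH1)"
    using A_nbrs fin(2) by (intro card_mono) auto
  finally show ?thesis .
qed

lemma copies_incompatible: False
proof -
  have "card (insert 1 {2 * k + 4..<3 * k + 6}) = k + 3"
    "card (insert (k + 2) {3 * k + 6..<4 * k + 8}) = k + 3" by simp_all
  then have "f2 0 \<in> f1 ` {0, k + 3}" "f2 (k + 3) \<in> f1 ` {0, k + 3}"
    using copy1_hub_if_three_nbrs card_nbrs_tree2_hub_in_copy1[OF tree2_hub_leaves(1)]
      card_nbrs_tree2_hub_in_copy1[OF tree2_hub_leaves(2)] by presburger+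
  moreover have "f2 0 \<noteq> f2 (k + 3)"
    using copy2(2) unfolding is_iso_def bij_betw_def inj_on_def by (simp add: tree2_verts_def)
  ultimately have ends: "{f2 0, f2 (k + 3)} = {f1 0, f1 (k + 3)}" by auto
  have H2: "EH2 \<subseteq> EU" "VH2 \<subseteq> VU" using copy2(1) by (simp_all add: subgraph_def)
  let ?p = "map f1 [0..<k + 4]" and ?q = "map f2 (map (tree2_spine k) [0..<k + 2])"
  have spine1: "set [0..<k + 4] \<subseteq> tree1_verts k" by (auto simp: tree1_verts_def)
  then have p: "path_between EU (f1 0) (f1 (k + 3)) ?p"
    by (rule path_between_is_iso[OF copy1(2) copy1_is_subtree(3) path_tree1_spine])
  have "set (map (tree2_spine k) [0..<k + 2]) \<subseteq> tree2_verts k"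
    by (auto simp: tree2_spine_def tree2_verts_def)
  then have q: "path_between EU (f2 0) (f2 (k + 3)) ?q" "set ?q \<subseteq> VU"
    using path_between_is_iso[OF copy2(2) H2(1) path_tree2_spine] copy2(2) H2(2)
    unfolding is_iso_def bij_betw_def by auto
  have "set ?p \<subseteq> VU" using spine1 copy1(2) copy1_is_subtree(2) unfolding is_iso_def bij_betw_def
    by auto
  moreover obtain q' where "path_between EU (f1 0) (f1 (k + 3)) q'" "set q' \<subseteq> VU" "length q' = k + 2"
    using ends q path_between_rev[OF q(1)] by (cases "f2 0 = f1 0") (auto simp: doubleton_eq_iff)
  ultimately have "?p = q'" using path_between_unique[OF forest(2) p] by blast
  moreover have "length ?p = k + 4" by simp
  ultimately show False using \<open>length q' = k + 2\<close> by simp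
qed

end

lemma no_small_universal_tree:
  assumes univ: "k_iso_universal k {(tree1_verts k, tree1_edges k), (tree2_verts k, tree2_edges k)} VU EU"
    and tree: "is_tree VU EU" and small: "card VU \<le> 4 * k + 8"
  shows False
proof -
  obtain VH1 EH1 f1 where copy1: "subgraph VH1 EH1 VU EU" "is_iso f1 (tree1_verts k) (tree1_edges k) VH1 EH1"
    using univ unfolding k_iso_universal_def k_iso_embeds_def isomorphic_iff_is_iso by blast
  obtain VH2 EH2 f2 where copy2: "subgraph VH2 EH2 VU EU" "is_iso f2 (tree2_verts k) (tree2_edges k) VH2 EH2"
    using univ unfolding k_iso_universal_def k_iso_embeds_def isomorphic_iff_is_iso by blast
  have "graph VU EU" "\<not> has_cycle VU EU" using tree by (simp_all add: is_tree_def)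
  from copies_incompatible[OF this small copy1 copy2] show False .
qed

theorem theorem7:
  fixes n :: nat
  assumes "n \<ge> 8"
  shows "\<exists>(V1 :: nat set) E1 (V2 :: nat set) E2.
           is_tree V1 E1 \<and> card V1 \<le> n \<and> is_tree V2 E2 \<and> card V2 \<le> n \<and>
           (\<forall>(VU :: nat set) EU.
              min_k_iso_universal ((n - 8) div 3) {(V1, E1), (V2, E2)} VU EU
              \<longrightarrow> \<not> is_tree VU EU)"
proof -
  define k where "k = (n - 8) div 3"
  have "3 * k + 8 \<le> n" using assms unfolding k_def by linarith
  then have sizes: "card (tree1_verts k) \<le> n" "card (tree2_verts k) \<le> n"
    by (simp_all add: card_tree1_verts card_tree2_verts)
  have "\<forall>(VU :: nat set) EU. min_k_iso_universal ((n - 8) div 3)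
      {(tree1_verts k, tree1_edges k), (tree2_verts k, tree2_edges k)} VU EU \<longrightarrow> \<not> is_tree VU EU"
  proof (intro allI impI notI)
    fix VU :: "nat set" and EU
    assume min: "min_k_iso_universal ((n - 8) div 3)
        {(tree1_verts k, tree1_edges k), (tree2_verts k, tree2_edges k)} VU EU"
      and tree: "is_tree VU EU"
    from min have univ: "k_iso_universal k
        {(tree1_verts k, tree1_edges k), (tree2_verts k, tree2_edges k)} VU EU"
      and small: "card VU \<le> 4 * k + 8"
      using k_iso_universal_univ unfolding min_k_iso_universal_def k_def
      by (fastforce simp: univ_verts_def)+
    show False by (rule no_small_universal_tree[OF univ tree small])
  qed
  then show ?thesis using is_tree_tree1 is_tree_tree2 sizes by blast
qed

end
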